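(* If $\Phi$ is a set of modal formulas such that $\mathbf{K}+\Phi=\mathrm{Log}_{>1}(\mathbb{R})$, then infinitely many distinct propositional variables occur in the formulas of $\Phi$. Consequently, $\mathrm{Log}_{>1}(\mathbb{R})$ is not finitely axiomatizable.
   Context: Modal formulas are built from a countable set of propositional variables using $\bot$, $\to$ and one unary modality $\lozenge$. $\mathrm{Log}_{>1}(\mathbb{R})$ is the set of formulas valid (true at every point under every valuation) in the frame $(\mathbb{R},R_{>1})$, where $xR_{>1}y$ iff $|x-y|>1$ and $x\models\lozenge\varphi$ iff some $y$ with $xR_{>1}y$ satisfies $\varphi$. A normal modal logic is a set of formulas containing all classical tautologies, $\neg\lozenge\bot$ and $\lozenge(p\vee q)\to\lozenge p\vee\lozenge q$, closed under modus ponens, uniform substitution, and the rule: from $\varphi\to\psi$ infer $\lozenge\varphi\to\lozenge\psi$. $\mathbf{K}+\Phi$ is the smallest normal modal logic containing $\Phi$. A logic is finitely axiomatizable if it equals $\mathbf{K}+\Phi$ for some finite $\Phi$. *)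

theory Defs
  imports Complex_Main
begin

datatype fm = Var nat | Bot | Imp fm fm | Dia fm

definition Neg :: "fm \<Rightarrow> fm" where "Neg p = Imp p Bot"
definition Or :: "fm \<Rightarrow> fm \<Rightarrow> fm" where "Or p q = Imp (Neg p) q"

fun vars :: "fm \<Rightarrow> nat set" where
  "vars (Var n) = {n}"
| "vars Bot = {}"
| "vars (Imp p q) = vars p \<union> vars q"
| "vars (Dia p) = vars p"

fun subst :: "(nat \<Rightarrow> fm) \<Rightarrow> fm \<Rightarrow> fm" where
  "subst s (Var n) = s n"
| "subst s Bot = Bot"
| "subst s (Imp p q) = Imp (subst s p) (subst s q)"
| "subst s (Dia p) = Dia (subst s p)"

text \<open>Classical tautologies: formulas true under every Boolean valuation,
  where variables and diamond-formulas are treated as propositional atoms.\<close>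
fun tval :: "(fm \<Rightarrow> bool) \<Rightarrow> fm \<Rightarrow> bool" where
  "tval v (Var n) = v (Var n)"
| "tval v Bot = False"
| "tval v (Imp p q) = (tval v p \<longrightarrow> tval v q)"
| "tval v (Dia p) = v (Dia p)"

definition tautology :: "fm \<Rightarrow> bool" where
  "tautology f \<longleftrightarrow> (\<forall>v. tval v f)"

inductive_set KPlus :: "fm set \<Rightarrow> fm set" for Phi :: "fm set" where
  taut: "tautology f \<Longrightarrow> f \<in> KPlus Phi"
| ax_bot: "Neg (Dia Bot) \<in> KPlus Phi"
| ax_or: "Imp (Dia (Or (Var 0) (Var 1))) (Or (Dia (Var 0)) (Dia (Var 1))) \<in> KPlus Phi"
| ax_Phi: "f \<in> Phi \<Longrightarrow> f \<in> KPlus Phi"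
| mp: "Imp f g \<in> KPlus Phi \<Longrightarrow> f \<in> KPlus Phi \<Longrightarrow> g \<in> KPlus Phi"
| us: "f \<in> KPlus Phi \<Longrightarrow> subst s f \<in> KPlus Phi"
| mono: "Imp f g \<in> KPlus Phi \<Longrightarrow> Imp (Dia f) (Dia g) \<in> KPlus Phi"

fun sat :: "(nat \<Rightarrow> real set) \<Rightarrow> real \<Rightarrow> fm \<Rightarrow> bool" where
  "sat V x (Var n) = (x \<in> V n)"
| "sat V x Bot = False"
| "sat V x (Imp p q) = (sat V x p \<longrightarrow> sat V x q)"
| "sat V x (Dia p) = (\<exists>y. \<bar>x - y\<bar> > 1 \<and> sat V y p)"

definition LogR :: "fm set" where
  "LogR = {f. \<forall>V x. sat V x f}"

definition finitely_axiomatizable :: "fm set \<Rightarrow> bool" where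
  "finitely_axiomatizable L \<longleftrightarrow> (\<exists>Phi. finite Phi \<and> L = KPlus Phi)"

end

theory Submission
  imports Defs
begin

text \<open>Let \<open>D\<^sub>m\<close> be the irreflexive clique on \<open>m\<close> points. Every normal logic \<open>K + \<Phi>\<close> is
  sound for the frames validating \<open>\<Phi>\<close>. If the variables of \<open>\<Phi>\<close> form a finite set \<open>N\<close> and
  \<open>m > 2^|N|\<close>, then every valuation on \<open>D\<^sub>m\<close> gives two distinct points \<open>u, v\<close> the same
  \<open>N\<close>-type. Sending disjoint unit intervals of the line to the other points and the rest of
  the line to \<open>{u, v}\<close> yields a bisimulation for \<open>N\<close>-formulas, so \<open>D\<^sub>m\<close> validates \<open>\<Phi>\<close> and
  hence all of \<open>K + \<Phi>\<close>. But \<open>Log\<^sub>>\<^sub>1(\<real>)\<close> contains a formula saying that the line is not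
  covered by \<open>m\<close> sets of radius 1, which fails on \<open>D\<^sub>m\<close>.\<close>

fun satK :: "('w \<Rightarrow> 'w \<Rightarrow> bool) \<Rightarrow> (nat \<Rightarrow> 'w set) \<Rightarrow> 'w \<Rightarrow> fm \<Rightarrow> bool" where
  "satK R V w (Var n) = (w \<in> V n)"
| "satK R V w Bot = False"
| "satK R V w (Imp p q) = (satK R V w p \<longrightarrow> satK R V w q)"
| "satK R V w (Dia p) = (\<exists>y. R w y \<and> satK R V y p)"

definition valid_on :: "'w set \<Rightarrow> ('w \<Rightarrow> 'w \<Rightarrow> bool) \<Rightarrow> fm \<Rightarrow> bool" where
  "valid_on W R f \<longleftrightarrow> (\<forall>V. \<forall>w\<in>W. satK R V w f)"

lemma sat_iff_satK: "sat V x f \<longleftrightarrow> satK (\<lambda>x y. 1 < \<bar>x - y\<bar>) V x f"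
  by (induction f arbitrary: x) auto

lemma tval_satK: "tval (satK R V w) f = satK R V w f"
  by (induction f) auto

lemma satK_subst: "satK R V w (subst s f) = satK R (\<lambda>n. {y. satK R V y (s n)}) w f"
  by (induction f arbitrary: w) auto

lemma finite_vars: "finite (vars f)"
  by (induction f) auto

lemma KPlus_sound:
  assumes "f \<in> KPlus Phi"
    and closed: "\<And>w y. w \<in> W \<Longrightarrow> R w y \<Longrightarrow> y \<in> W"
    and Phi: "\<forall>g\<in>Phi. valid_on W R g"
  shows "valid_on W R f"
  using assms(1)
proof induction
  case (taut f)
  then show ?case by (simp add: valid_on_def tautology_def flip: tval_satK)
next
  case ax_bot
  then show ?case by (simp add: valid_on_def Neg_def)
next
  case ax_or
  then show ?case by (auto simp: valid_on_def Neg_def Or_def)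
next
  case (ax_Phi f)
  then show ?case using Phi by blast
next
  case (mp f g)
  then show ?case by (auto simp: valid_on_def)
next
  case (us f s)
  then show ?case by (simp add: valid_on_def satK_subst)
next
  case (mono f g)
  then show ?case by (fastforce simp: valid_on_def dest: closed)
qed

lemma satK_bisim:
  assumes atoms: "\<And>x w i. Z x w \<Longrightarrow> i \<in> N \<Longrightarrow> x \<in> V\<^sub>1 i \<longleftrightarrow> w \<in> V\<^sub>2 i"
    and zig: "\<And>x w y. Z x w \<Longrightarrow> R\<^sub>1 x y \<Longrightarrow> \<exists>w'. R\<^sub>2 w w' \<and> Z y w'"
    and zag: "\<And>x w w'. Z x w \<Longrightarrow> R\<^sub>2 w w' \<Longrightarrow> \<exists>y. R\<^sub>1 x y \<and> Z y w'"
    and "vars f \<subseteq> N" "Z x w"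
  shows "satK R\<^sub>1 V\<^sub>1 x f \<longleftrightarrow> satK R\<^sub>2 V\<^sub>2 w f"
  using assms(4,5)
proof (induction f arbitrary: x w)
  case (Dia p)
  then show ?case using zig zag by simp metis
qed (use atoms in auto)

lemma exists_same_type:
  fixes V :: "nat \<Rightarrow> nat set"
  assumes "finite N" "2 ^ card N < m"
  obtains u v where "u < m" "v < m" "u \<noteq> v" "\<forall>i\<in>N. u \<in> V i \<longleftrightarrow> v \<in> V i"
proof -
  define type where "type w = {i\<in>N. w \<in> V i}" for w
  have "\<not> inj_on type {..<m}"
  proof
    assume "inj_on type {..<m}"
    then have "card {..<m} \<le> card (Pow N)"
      using \<open>finite N\<close> by (intro card_inj_on_le) (auto simp: type_def)
    then show False using assms by (simp add: card_Pow)
  qed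
  then obtain u v where "u < m" "v < m" "u \<noteq> v" "type u = type v"
    unfolding inj_on_def by blast
  then show thesis by (intro that) (auto simp: type_def set_eq_iff)
qed

definition clique :: "nat \<Rightarrow> nat \<Rightarrow> nat \<Rightarrow> bool" where
  "clique m x y \<longleftrightarrow> x \<noteq> y \<and> y < m"

text \<open>The interval \<open>[2k, 2k+1]\<close> goes to \<open>k\<close> for \<open>k < m\<close>, the rest of the line to \<open>u\<close>.\<close>

definition fold_index :: "nat \<Rightarrow> nat \<Rightarrow> real \<Rightarrow> nat" where
  "fold_index m u x =
    (if 0 \<le> x \<and> x \<le> 2 * of_int \<lfloor>x / 2\<rfloor> + 1 \<and> nat \<lfloor>x / 2\<rfloor> < m then nat \<lfloor>x / 2\<rfloor> else u)"

lemma fold_index_less: "u < m \<Longrightarrow> fold_index m u x < m"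
  by (simp add: fold_index_def)

lemma fold_index_neg: "x < 0 \<Longrightarrow> fold_index m u x = u"
  by (simp add: fold_index_def)

lemma fold_index_eqI:
  assumes "k < m" "2 * real k \<le> x" "x \<le> 2 * real k + 1"
  shows "fold_index m u x = k"
proof -
  have "\<lfloor>x / 2\<rfloor> = int k"
    using assms by (simp add: floor_eq_iff)
  then show ?thesis using assms by (simp add: fold_index_def)
qed

lemma fold_index_eqD:
  assumes "fold_index m u x = k" "k \<noteq> u"
  shows "2 * real k \<le> x \<and> x \<le> 2 * real k + 1"
proof -
  have "0 \<le> x" "nat \<lfloor>x / 2\<rfloor> = k" "x \<le> 2 * of_int \<lfloor>x / 2\<rfloor> + 1"
    using assms by (auto simp: fold_index_def split: if_splits)
  moreover have "of_int \<lfloor>x / 2\<rfloor> \<le> x / 2" by (rule of_int_floor_le)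
  ultimately show ?thesis by auto
qed

text \<open>Relating \<open>x\<close> to \<open>fold_index m u x\<close> alone is not a bisimulation, since far apart reals
  both go to \<open>u\<close>; identifying \<open>u\<close> with a second point \<open>v\<close> repairs this.\<close>

definition fold_rel :: "nat \<Rightarrow> nat \<Rightarrow> nat \<Rightarrow> real \<Rightarrow> nat \<Rightarrow> bool" where
  "fold_rel m u v x w \<longleftrightarrow> fold_index m u x = w \<or> fold_index m u x \<in> {u, v} \<and> w \<in> {u, v}"

lemma fold_rel_zig:
  assumes "u < m" "v < m" "u \<noteq> v" "fold_rel m u v x w" "1 < \<bar>x - y\<bar>"
  shows "\<exists>w'. clique m w w' \<and> fold_rel m u v y w'"
proof (cases "fold_index m u y = w")
  case True
  have "w \<in> {u, v}"
  proof (rule ccontr)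
    assume "w \<notin> {u, v}"
    then have "fold_index m u x = w" using \<open>fold_rel m u v x w\<close> by (auto simp: fold_rel_def)
    then show False
      using fold_index_eqD[of m u x w] fold_index_eqD[of m u y w] True \<open>w \<notin> {u, v}\<close> assms(5)
      by auto
  qed
  then show ?thesis
    using True assms(1-3)
    by (intro exI[of _ "if w = u then v else u"]) (auto simp: clique_def fold_rel_def)
next
  case False
  then show ?thesis
    using fold_index_less[OF \<open>u < m\<close>]
    by (intro exI[of _ "fold_index m u y"]) (auto simp: clique_def fold_rel_def)
qed

lemma fold_rel_zag:
  assumes "fold_rel m u v x w" "clique m w w'"
  shows "\<exists>y. 1 < \<bar>x - y\<bar> \<and> fold_rel m u v y w'"
proof (cases "w' \<in> {u, v}")
  case True
  then show ?thesis
    using fold_index_neg[of "- \<bar>x\<bar> - 2" m u]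
    by (intro exI[of _ "- \<bar>x\<bar> - 2"]) (auto simp: fold_rel_def)
next
  case False
  have "w' < m" "w' \<noteq> w" using assms(2) by (auto simp: clique_def)
  have block: "fold_index m u y = w'" if "2 * real w' \<le> y" "y \<le> 2 * real w' + 1" for y
    using that \<open>w' < m\<close> by (simp add: fold_index_eqI)
  have "\<not> (2 * real w' \<le> x \<and> x \<le> 2 * real w' + 1)"
    using block assms(1) \<open>w' \<noteq> w\<close> False by (auto simp: fold_rel_def)
  then consider "1 < \<bar>x - 2 * real w'\<bar>" | "1 < \<bar>x - (2 * real w' + 1)\<bar>"
    by linarith
  then show ?thesis
  proof cases
    case 1
    then show ?thesis using block[of "2 * real w'"] by (auto simp: fold_rel_def)
  next
    case 2
    then show ?thesis using block[of "2 * real w' + 1"] by (auto simp: fold_rel_def)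
  qed
qed

lemma fold_rel_surj:
  assumes "w < m"
  obtains x where "fold_rel m u v x w"
proof (cases "w \<in> {u, v}")
  case True
  then show thesis using fold_index_neg[of "-1" m u] by (intro that[of "-1"]) (auto simp: fold_rel_def)
next
  case False
  then show thesis
    using assms fold_index_eqI[of w m "2 * real w" u]
    by (intro that[of "2 * real w"]) (auto simp: fold_rel_def)
qed

lemma LogR_valid_on_clique:
  assumes "finite N" "2 ^ card N < m" "\<phi> \<in> LogR" "vars \<phi> \<subseteq> N"
  shows "valid_on {..<m} (clique m) \<phi>"
  unfolding valid_on_def
proof (intro allI ballI)
  fix V w assume "w \<in> {..<m}"
  then have "w < m" by simp
  obtain u v where uv: "u < m" "v < m" "u \<noteq> v" and same: "\<forall>i\<in>N. u \<in> V i \<longleftrightarrow> v \<in> V i"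
    using exists_same_type assms(1,2) by blast
  let ?U = "\<lambda>i. {x. fold_index m u x \<in> V i}"
  have atoms: "x \<in> ?U i \<longleftrightarrow> w \<in> V i" if "fold_rel m u v x w" "i \<in> N" for x w i
  proof -
    have "u \<in> V i \<longleftrightarrow> v \<in> V i" using same \<open>i \<in> N\<close> by blast
    then show ?thesis using \<open>fold_rel m u v x w\<close> unfolding fold_rel_def by auto
  qed
  obtain x where "fold_rel m u v x w"
    by (rule fold_rel_surj[OF \<open>w < m\<close>])
  moreover have "sat ?U x \<phi>"
    using assms(3) by (simp add: LogR_def)
  ultimately show "satK (clique m) V w \<phi>"
    using satK_bisim[where Z = "fold_rel m u v" and V\<^sub>1 = ?U and V\<^sub>2 = V
        and R\<^sub>1 = "\<lambda>x y. 1 < \<bar>x - y\<bar>" and R\<^sub>2 = "clique m",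
        OF atoms fold_rel_zig[OF uv] fold_rel_zag assms(4)]
    by (simp add: sat_iff_satK)
qed

text \<open>At a real \<open>y\<close>, \<open>\<not>(p\<^sub>i \<rightarrow> \<diamond>p\<^sub>i)\<close> says that \<open>p\<^sub>i\<close> holds at \<open>y\<close> and nowhere outside
  \<open>[y - 1, y + 1]\<close>. Every real is two steps away from every other one, so
  \<open>cover_fm m\<close> says that the line is not covered by \<open>m\<close> such sets.\<close>

fun isolated_disj :: "nat \<Rightarrow> fm" where
  "isolated_disj 0 = Bot"
| "isolated_disj (Suc i) = Or (Neg (Imp (Var i) (Dia (Var i)))) (isolated_disj i)"

definition cover_fm :: "nat \<Rightarrow> fm" where
  "cover_fm m = Dia (Dia (Neg (isolated_disj m)))"

lemma satK_isolated_disj: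
  "satK R V w (isolated_disj m) \<longleftrightarrow> (\<exists>i<m. w \<in> V i \<and> (\<forall>y. R w y \<longrightarrow> y \<notin> V i))"
  by (induction m) (auto simp: Or_def Neg_def less_Suc_eq)

lemma real_not_isolated_cover:
  fixes V :: "nat \<Rightarrow> real set"
  shows "\<exists>y. \<forall>i<m. y \<in> V i \<longrightarrow> (\<exists>t. 1 < \<bar>y - t\<bar> \<and> t \<in> V i)"
proof (rule ccontr)
  assume "\<not> ?thesis"
  then obtain f where f: "\<And>y. f y < m \<and> y \<in> V (f y) \<and> (\<forall>t. 1 < \<bar>y - t\<bar> \<longrightarrow> t \<notin> V (f y))"
    by metis
  have "\<not> inj_on (\<lambda>k. f (2 * real k)) {..m}"
  proof
    assume "inj_on (\<lambda>k. f (2 * real k)) {..m}"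
    then have "card {..m} \<le> card {..<m}"
      using f by (intro card_inj_on_le) auto
    then show False by simp
  qed
  then obtain k l where "k \<noteq> l" "f (2 * real k) = f (2 * real l)"
    unfolding inj_on_def by blast
  moreover have "1 < \<bar>2 * real k - 2 * real l\<bar>"
    using \<open>k \<noteq> l\<close> by (cases "k < l") auto
  ultimately show False using f by metis
qed

lemma cover_fm_in_LogR: "cover_fm m \<in> LogR"
proof -
  have "sat V x (cover_fm m)" for V x
  proof -
    obtain y where "\<forall>i<m. y \<in> V i \<longrightarrow> (\<exists>t. 1 < \<bar>y - t\<bar> \<and> t \<in> V i)"
      using real_not_isolated_cover by blast
    moreover have "1 < \<bar>x - (\<bar>x\<bar> + \<bar>y\<bar> + 2)\<bar>" "1 < \<bar>(\<bar>x\<bar> + \<bar>y\<bar> + 2) - y\<bar>"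
      by auto
    ultimately have "\<exists>z. 1 < \<bar>x - z\<bar> \<and> (\<exists>y. 1 < \<bar>z - y\<bar> \<and>
        (\<forall>i<m. y \<in> V i \<longrightarrow> (\<exists>t. 1 < \<bar>y - t\<bar> \<and> t \<in> V i)))"
      by blast
    then show ?thesis
      by (simp add: sat_iff_satK cover_fm_def satK_isolated_disj Neg_def) blast
  qed
  then show ?thesis by (simp add: LogR_def)
qed

lemma cover_fm_fails_on_clique: "\<not> satK (clique m) (\<lambda>i. {i}) w (cover_fm m)"
  by (auto simp: cover_fm_def satK_isolated_disj clique_def Neg_def)

theorem proposition5p1:
  shows "(\<forall>Phi. KPlus Phi = LogR \<longrightarrow> infinite (\<Union>f\<in>Phi. vars f))
         \<and> \<not> finitely_axiomatizable LogR"
proof -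
  have infinite_vars: "infinite (\<Union>f\<in>Phi. vars f)" if L: "KPlus Phi = LogR" for Phi
  proof
    assume fin: "finite (\<Union>f\<in>Phi. vars f)"
    define m where "m = Suc (2 ^ card (\<Union>f\<in>Phi. vars f))"
    have "\<forall>g\<in>Phi. valid_on {..<m} (clique m) g"
    proof
      fix g assume "g \<in> Phi"
      then have "g \<in> LogR" "vars g \<subseteq> (\<Union>f\<in>Phi. vars f)"
        using L KPlus.ax_Phi by blast+
      then show "valid_on {..<m} (clique m) g"
        by (intro LogR_valid_on_clique[OF fin]) (simp_all add: m_def)
    qed
    then have "valid_on {..<m} (clique m) (cover_fm m)"
      by (intro KPlus_sound) (auto simp: L cover_fm_in_LogR clique_def)
    then show False
      using cover_fm_fails_on_clique by (auto simp: valid_on_def m_def)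
  qed
  moreover have "\<not> finitely_axiomatizable LogR"
    using infinite_vars finite_vars by (auto simp: finitely_axiomatizable_def)
  ultimately show ?thesis by blast
qed

end
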